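(* Let $1\le p\le\infty$, $\mathbb{D}=\{z\in\mathbb{C}:|z|<1\}$, $a\in\mathbb{D}$, and $T_a(z)=\frac{z-a}{1-\overline{a}z}$. Then $T_a:(\mathbb{D},b_{\mathbb{D},p})\to(\mathbb{D},b_{\mathbb{D},p})$ is $L$-bilipschitz with $L=\frac{1+|a|}{1-|a|}$, i.e. for all $z_1,z_2\in\mathbb{D}$, \[ \frac{1-|a|}{1+|a|}\,b_{\mathbb{D},p}(z_1,z_2)\le b_{\mathbb{D},p}(T_a(z_1),T_a(z_2))\le\frac{1+|a|}{1-|a|}\,b_{\mathbb{D},p}(z_1,z_2). \]
   Context: For $z_1,z_2\in\mathbb{D}$ and $1\le p<\infty$, $b_{\mathbb{D},p}(z_1,z_2)=\sup_{z\in\partial\mathbb{D}}\frac{|z_1-z_2|}{\sqrt[p]{|z_1-z|^p+|z-z_2|^p}}$, and $b_{\mathbb{D},\infty}(z_1,z_2)=\sup_{z\in\partial\mathbb{D}}\frac{|z_1-z_2|}{\max\{|z_1-z|,|z_2-z|\}}$. *)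

theory Defs
  imports "HOL-Analysis.Analysis" "HOL-Library.Extended_Real"
begin

definition unit_disk :: "complex set" where
  "unit_disk = ball 0 1"

definition b_disk :: "ereal \<Rightarrow> complex \<Rightarrow> complex \<Rightarrow> real" where
  "b_disk p z1 z2 =
     (if p = \<infinity> then
        (SUP z\<in>sphere (0::complex) 1. cmod (z1 - z2) / max (cmod (z1 - z)) (cmod (z2 - z)))
      else
        (SUP z\<in>sphere (0::complex) 1.
           cmod (z1 - z2) / ((cmod (z1 - z) powr real_of_ereal p + cmod (z - z2) powr real_of_ereal p)
                              powr (1 / real_of_ereal p))))"

definition moebius_T :: "complex \<Rightarrow> complex \<Rightarrow> complex" where
  "moebius_T a z = (z - a) / (1 - cnj a * z)"

end

theory Submission
  imports Defs "HOL-Complex_Analysis.Riemann_Mapping"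
begin

text \<open>
  For \<open>|a| < 1\<close>, the map \<open>T\<^sub>a\<close> sends the unit circle into itself and satisfies
  \<open>|T\<^sub>a u - T\<^sub>a v| = (1 - |a|\<^sup>2) |u - v| / (|1 - cnj a u| |1 - cnj a v|)\<close>.
  As the \<open>l\<^sup>p\<close>-norm of a pair is homogeneous and monotone, the quotient defining
  \<open>b(T\<^sub>a z\<^sub>1, T\<^sub>a z\<^sub>2)\<close> at \<open>T\<^sub>a z\<close> is at least
  \<open>|1 - cnj a z| / max(|1 - cnj a z\<^sub>1|, |1 - cnj a z\<^sub>2|) \<ge> (1 - |a|) / (1 + |a|)\<close>
  times the quotient defining \<open>b(z\<^sub>1, z\<^sub>2)\<close> at \<open>z\<close>. This is the lower bound;
  the upper bound is the lower bound for the inverse map \<open>T\<^sub>-\<^sub>a\<close>.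
\<close>

definition lp_norm2 :: "ereal \<Rightarrow> real \<Rightarrow> real \<Rightarrow> real" where
  "lp_norm2 p X Y = (if p = \<infinity> then max X Y
     else (X powr real_of_ereal p + Y powr real_of_ereal p) powr (1 / real_of_ereal p))"

definition b_disk_quotient :: "ereal \<Rightarrow> complex \<Rightarrow> complex \<Rightarrow> complex \<Rightarrow> real" where
  "b_disk_quotient p z1 z2 z = cmod (z1 - z2) / lp_norm2 p (cmod (z1 - z)) (cmod (z - z2))"

lemma b_disk_eq_SUP_quotient:
  "b_disk p z1 z2 = (SUP z\<in>sphere 0 1. b_disk_quotient p z1 z2 z)"
  unfolding b_disk_def b_disk_quotient_def lp_norm2_def
  by (cases "p = \<infinity>") (auto simp: norm_minus_commute intro!: SUP_cong)

lemma one_le_real_of_ereal: "1 \<le> p \<Longrightarrow> p \<noteq> \<infinity> \<Longrightarrow> 1 \<le> real_of_ereal p"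
  by (cases p) auto

lemma lp_norm2_scale:
  assumes "1 \<le> p" "0 \<le> c" "0 \<le> X" "0 \<le> Y"
  shows "lp_norm2 p (c * X) (c * Y) = c * lp_norm2 p X Y"
proof (cases "p = \<infinity>")
  case True
  then show ?thesis using assms by (simp add: lp_norm2_def max_mult_distrib_left)
next
  case False
  define q where "q = real_of_ereal p"
  have q: "1 \<le> q" using one_le_real_of_ereal[OF assms(1) False] by (simp add: q_def)
  have "((c * X) powr q + (c * Y) powr q) powr (1/q) = (c powr q * (X powr q + Y powr q)) powr (1/q)"
    using assms by (simp add: powr_mult distrib_left)
  also have "\<dots> = c * (X powr q + Y powr q) powr (1/q)"
    using assms q by (simp add: powr_mult powr_powr)
  finally show ?thesis using False by (simp add: lp_norm2_def q_def)
qed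

lemma lp_norm2_mono:
  assumes "1 \<le> p" "0 \<le> X" "X \<le> X'" "0 \<le> Y" "Y \<le> Y'"
  shows "lp_norm2 p X Y \<le> lp_norm2 p X' Y'"
proof (cases "p = \<infinity>")
  case True
  then show ?thesis using assms by (auto simp: lp_norm2_def max_def)
next
  case False
  define q where "q = real_of_ereal p"
  have q: "1 \<le> q" using one_le_real_of_ereal[OF assms(1) False] by (simp add: q_def)
  have "X powr q + Y powr q \<le> X' powr q + Y' powr q"
    using assms q by (intro add_mono powr_mono2) auto
  then have "(X powr q + Y powr q) powr (1/q) \<le> (X' powr q + Y' powr q) powr (1/q)"
    using q by (intro powr_mono2) auto
  then show ?thesis using False by (simp add: lp_norm2_def q_def)
qed

lemma lp_norm2_ge_left:
  assumes "1 \<le> p" "0 \<le> X" "0 \<le> Y"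
  shows "X \<le> lp_norm2 p X Y"
proof (cases "p = \<infinity>")
  case True
  then show ?thesis by (simp add: lp_norm2_def)
next
  case False
  define q where "q = real_of_ereal p"
  have q: "1 \<le> q" using one_le_real_of_ereal[OF assms(1) False] by (simp add: q_def)
  have "X = (X powr q) powr (1/q)" using q assms by (simp add: powr_powr)
  also have "\<dots> \<le> (X powr q + Y powr q) powr (1/q)"
    using q by (intro powr_mono2) auto
  finally show ?thesis using False by (simp add: lp_norm2_def q_def)
qed

lemma moebius_T_eq_Moebius_function: "moebius_T a = Moebius_function 0 a"
  by (simp add: fun_eq_iff moebius_T_def Moebius_function_simple)

lemma norm_moebius_T_less_1: "cmod a < 1 \<Longrightarrow> cmod z < 1 \<Longrightarrow> cmod (moebius_T a z) < 1"
  by (simp add: moebius_T_eq_Moebius_function Moebius_function_norm_lt_1)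

lemma moebius_T_inverse: "cmod a < 1 \<Longrightarrow> cmod z < 1 \<Longrightarrow> moebius_T (- a) (moebius_T a z) = z"
  by (simp add: moebius_T_eq_Moebius_function Moebius_function_compose)

lemma norm_one_minus_cnj_mult_bounds:
  assumes "cmod a < 1" "cmod z \<le> 1"
  shows "1 - cmod a \<le> cmod (1 - cnj a * z)" "cmod (1 - cnj a * z) \<le> 1 + cmod a"
proof -
  have az: "cmod (cnj a * z) \<le> cmod a"
    using assms by (simp add: norm_mult mult_left_le)
  show "1 - cmod a \<le> cmod (1 - cnj a * z)"
    using norm_triangle_ineq2[of 1 "cnj a * z"] az by simp
  show "cmod (1 - cnj a * z) \<le> 1 + cmod a"
    using norm_triangle_ineq4[of 1 "cnj a * z"] az by simp
qed

lemma norm_moebius_T_sphere: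
  assumes "cmod a < 1" "cmod z = 1"
  shows "cmod (moebius_T a z) = 1"
proof -
  have "1 - cnj a * z = z * cnj (z - a)"
    using assms by (simp add: algebra_simps complex_norm_square[symmetric])
  then have "cmod (1 - cnj a * z) = cmod (z - a)"
    using assms by (simp add: norm_mult del: complex_cnj_diff)
  moreover have "z \<noteq> a" using assms by auto
  ultimately show ?thesis by (simp add: moebius_T_def norm_divide)
qed

lemma norm_moebius_T_diff:
  assumes "cmod a < 1" "cmod z \<le> 1" "cmod w \<le> 1"
  shows "cmod (moebius_T a z - moebius_T a w) =
    (1 - cmod a ^ 2) / (cmod (1 - cnj a * z) * cmod (1 - cnj a * w)) * cmod (z - w)"
proof -
  have "1 - cnj a * z \<noteq> 0" "1 - cnj a * w \<noteq> 0"
    using norm_one_minus_cnj_mult_bounds(1)[OF assms(1)] assms by fastforce+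
  then have "moebius_T a z - moebius_T a w =
      (1 - cnj a * a) / ((1 - cnj a * z) * (1 - cnj a * w)) * (z - w)"
    by (simp add: moebius_T_def field_simps)
  moreover have "cmod (1 - cnj a * a) = 1 - cmod a ^ 2"
  proof -
    have "1 - cnj a * a = complex_of_real (1 - cmod a ^ 2)"
      using complex_norm_square[of a] by (simp add: mult.commute)
    moreover have "cmod a ^ 2 < 1" using assms(1) by (simp add: abs_square_less_1)
    ultimately show ?thesis by (simp only: norm_of_real)
  qed
  ultimately show ?thesis by (simp only: norm_mult norm_divide)
qed

lemma bdd_above_b_disk_quotient:
  assumes "1 \<le> p" "cmod z1 < 1"
  shows "bdd_above (b_disk_quotient p z1 z2 ` sphere 0 1)"
proof (rule bdd_aboveI2)
  fix z :: complex assume "z \<in> sphere 0 1"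
  then have "1 - cmod z1 \<le> cmod (z1 - z)"
    using norm_triangle_ineq2[of z z1] by (simp add: norm_minus_commute)
  also have "\<dots> \<le> lp_norm2 p (cmod (z1 - z)) (cmod (z - z2))"
    using assms(1) by (simp add: lp_norm2_ge_left)
  finally show "b_disk_quotient p z1 z2 z \<le> cmod (z1 - z2) / (1 - cmod z1)"
    unfolding b_disk_quotient_def using assms(2) by (intro divide_left_mono) auto
qed

lemma b_disk_quotient_moebius:
  assumes p: "1 \<le> p" and a: "cmod a < 1"
    and z1: "cmod z1 \<le> 1" and z2: "cmod z2 \<le> 1" and z: "cmod z \<le> 1"
  shows "b_disk_quotient p (moebius_T a z1) (moebius_T a z2) (moebius_T a z)
    = cmod (1 - cnj a * z) / (cmod (1 - cnj a * z1) * cmod (1 - cnj a * z2)) * cmod (z1 - z2)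
      / lp_norm2 p (cmod (z1 - z) / cmod (1 - cnj a * z1)) (cmod (z - z2) / cmod (1 - cnj a * z2))"
proof -
  define A B C where "A = cmod (1 - cnj a * z1)" and "B = cmod (1 - cnj a * z2)"
    and "C = cmod (1 - cnj a * z)"
  define k where "k = 1 - cmod a ^ 2"
  define X Y D where "X = cmod (z1 - z)" and "Y = cmod (z - z2)" and "D = cmod (z1 - z2)"
  have "0 < A" "0 < B" "0 < C"
    using norm_one_minus_cnj_mult_bounds(1)[OF a] a z1 z2 z by (fastforce simp: A_def B_def C_def)+
  have "0 < k" using a by (simp add: k_def abs_square_less_1)
  have "b_disk_quotient p (moebius_T a z1) (moebius_T a z2) (moebius_T a z)
      = (k / (A * B) * D) / lp_norm2 p (k / C * (X / A)) (k / C * (Y / B))"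
    unfolding b_disk_quotient_def using z1 z2 z
    by (simp add: norm_moebius_T_diff[OF a] A_def B_def C_def D_def X_def Y_def k_def mult_ac)
  also have "\<dots> = (k / (A * B) * D) / (k / C * lp_norm2 p (X / A) (Y / B))"
    using \<open>0 < A\<close> \<open>0 < B\<close> \<open>0 < C\<close> \<open>0 < k\<close>
    by (subst lp_norm2_scale[OF p]) (auto simp: X_def Y_def)
  also have "\<dots> = C / (A * B) * D / lp_norm2 p (X / A) (Y / B)"
    using \<open>0 < C\<close> \<open>0 < k\<close> by (simp add: field_simps)
  finally show ?thesis by (simp add: A_def B_def C_def D_def X_def Y_def)
qed

lemma b_disk_quotient_moebius_ge:
  assumes p: "1 \<le> p" and a: "cmod a < 1" and z1: "cmod z1 < 1" and z2: "cmod z2 < 1"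
    and z: "cmod z = 1"
  shows "(1 - cmod a) / (1 + cmod a) * b_disk_quotient p z1 z2 z
    \<le> b_disk_quotient p (moebius_T a z1) (moebius_T a z2) (moebius_T a z)"
proof -
  define A B C where "A = cmod (1 - cnj a * z1)" and "B = cmod (1 - cnj a * z2)"
    and "C = cmod (1 - cnj a * z)"
  define m M where "m = min A B" and "M = max A B"
  define X Y D where "X = cmod (z1 - z)" and "Y = cmod (z - z2)" and "D = cmod (z1 - z2)"
  define N N' where "N = lp_norm2 p X Y" and "N' = lp_norm2 p (X / A) (Y / B)"
  have A: "1 - cmod a \<le> A" "A \<le> 1 + cmod a"
    using norm_one_minus_cnj_mult_bounds[OF a, of z1] z1 by (auto simp: A_def)
  have B: "1 - cmod a \<le> B" "B \<le> 1 + cmod a"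
    using norm_one_minus_cnj_mult_bounds[OF a, of z2] z2 by (auto simp: B_def)
  have C: "1 - cmod a \<le> C"
    using norm_one_minus_cnj_mult_bounds[OF a, of z] z by (auto simp: C_def)
  have "0 < A" "0 < B" "0 < C" "0 < m" using A B C a by (auto simp: m_def)
  have "0 < X"
    using norm_triangle_ineq2[of z z1] z z1 by (auto simp: X_def norm_minus_commute)
  have "0 \<le> Y" "0 \<le> D" by (simp_all add: Y_def D_def)
  have "0 < N" using lp_norm2_ge_left[OF p, of X Y] \<open>0 < X\<close> \<open>0 \<le> Y\<close> unfolding N_def by linarith
  have "0 < X / A" using \<open>0 < A\<close> \<open>0 < X\<close> by simp
  then have "0 < N'"
    using lp_norm2_ge_left[OF p, of "X / A" "Y / B"] \<open>0 < B\<close> \<open>0 \<le> Y\<close>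
    unfolding N'_def by simp
  have "N' \<le> lp_norm2 p (X / m) (Y / m)"
    unfolding N'_def using \<open>0 < m\<close> \<open>0 < X\<close> \<open>0 \<le> Y\<close>
    by (intro lp_norm2_mono p divide_left_mono) (auto simp: m_def)
  also have "\<dots> = N / m"
    using lp_norm2_scale[OF p, of "1 / m" X Y] \<open>0 < m\<close> \<open>0 < X\<close> \<open>0 \<le> Y\<close> by (simp add: N_def)
  finally have "N' \<le> N / m" .
  have "(1 - cmod a) / (1 + cmod a) * (D / N) \<le> C / M * (D / N)"
    using A B C a \<open>0 < N\<close> \<open>0 \<le> D\<close> by (intro mult_right_mono frac_le) (auto simp: M_def)
  also have "\<dots> = C / (A * B) * D / (N / m)"
    using \<open>0 < m\<close> by (auto simp: m_def M_def min_def max_def field_simps)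
  also have "\<dots> \<le> C / (A * B) * D / N'"
    using \<open>N' \<le> N / m\<close> \<open>0 < N'\<close> \<open>0 < N\<close> \<open>0 < m\<close> \<open>0 < A\<close> \<open>0 < B\<close> \<open>0 < C\<close> \<open>0 \<le> D\<close>
    by (intro divide_left_mono) auto
  finally show ?thesis
    using b_disk_quotient_moebius[OF p a] z1 z2 z
    by (simp add: b_disk_quotient_def A_def B_def C_def D_def N_def N'_def X_def Y_def)
qed

lemma b_disk_moebius_ge:
  assumes p: "1 \<le> p" and a: "cmod a < 1" and z1: "cmod z1 < 1" and z2: "cmod z2 < 1"
  shows "(1 - cmod a) / (1 + cmod a) * b_disk p z1 z2 \<le> b_disk p (moebius_T a z1) (moebius_T a z2)"
proof -
  define c where "c = (1 - cmod a) / (1 + cmod a)"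
  have "0 < c" using a by (simp add: c_def add_pos_nonneg)
  have bdd: "bdd_above (b_disk_quotient p (moebius_T a z1) (moebius_T a z2) ` sphere 0 1)"
    using bdd_above_b_disk_quotient[OF p] norm_moebius_T_less_1[OF a z1] .
  have "b_disk p z1 z2 \<le> b_disk p (moebius_T a z1) (moebius_T a z2) / c"
    unfolding b_disk_eq_SUP_quotient
  proof (rule cSUP_least)
    fix z :: complex assume "z \<in> sphere 0 1"
    then have "moebius_T a z \<in> sphere 0 1" by (simp add: norm_moebius_T_sphere[OF a])
    have "c * b_disk_quotient p z1 z2 z
        \<le> b_disk_quotient p (moebius_T a z1) (moebius_T a z2) (moebius_T a z)"
      using b_disk_quotient_moebius_ge[OF p a z1 z2] \<open>z \<in> sphere 0 1\<close> by (simp add: c_def)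
    also have "\<dots> \<le> (SUP w\<in>sphere 0 1. b_disk_quotient p (moebius_T a z1) (moebius_T a z2) w)"
      using \<open>moebius_T a z \<in> sphere 0 1\<close> bdd by (rule cSUP_upper)
    finally show "b_disk_quotient p z1 z2 z
        \<le> (SUP w\<in>sphere 0 1. b_disk_quotient p (moebius_T a z1) (moebius_T a z2) w) / c"
      using \<open>0 < c\<close> by (simp add: field_simps)
  qed simp
  then have "c * b_disk p z1 z2 \<le> b_disk p (moebius_T a z1) (moebius_T a z2)"
    using \<open>0 < c\<close> by (simp add: pos_le_divide_eq mult.commute)
  then show ?thesis by (simp add: c_def)
qed

theorem theorem4p2:
  fixes p :: ereal and a z1 z2 :: complex
  assumes "1 \<le> p" and "a \<in> unit_disk" and "z1 \<in> unit_disk" and "z2 \<in> unit_disk"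
  shows "(1 - cmod a) / (1 + cmod a) * b_disk p z1 z2 \<le> b_disk p (moebius_T a z1) (moebius_T a z2)
       \<and> b_disk p (moebius_T a z1) (moebius_T a z2) \<le> (1 + cmod a) / (1 - cmod a) * b_disk p z1 z2"
proof
  have a: "cmod a < 1" and z1: "cmod z1 < 1" and z2: "cmod z2 < 1"
    using assms by (auto simp: unit_disk_def)
  show "(1 - cmod a) / (1 + cmod a) * b_disk p z1 z2 \<le> b_disk p (moebius_T a z1) (moebius_T a z2)"
    using b_disk_moebius_ge[OF assms(1) a z1 z2] .
  have "(1 - cmod a) / (1 + cmod a) * b_disk p (moebius_T a z1) (moebius_T a z2) \<le> b_disk p z1 z2"
    using b_disk_moebius_ge[OF assms(1), of "- a" "moebius_T a z1" "moebius_T a z2"] a z1 z2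
    by (simp add: norm_moebius_T_less_1 moebius_T_inverse)
  then show "b_disk p (moebius_T a z1) (moebius_T a z2) \<le> (1 + cmod a) / (1 - cmod a) * b_disk p z1 z2"
    using a by (simp add: field_simps add_pos_nonneg)
qed

end
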